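(* Let $B\ge1$, $C\ge1$ and $\theta,\tilde\theta\in[-B,B]^P$. Then for all $\mathbf{x}\in\mathbb{R}^p$, \[ |f_\theta(\mathbf{x})-f_{\tilde\theta}(\mathbf{x})|\le 4(2rB)^L(|\mathbf{x}|_1\vee1)\,|\theta-\tilde\theta|_\infty. \]
   Context: ReLU $\sigma(x)=\max(x,0)$ coordinatewise. For $L,r\in\mathbb{N}$, $g_\theta(\mathbf{x})=W^{(L+1)}\mathbf{x}^{(L)}+v^{(L+1)}$ with $\mathbf{x}^{(0)}=\mathbf{x}\in\mathbb{R}^p$, $\mathbf{x}^{(l)}=\sigma(W^{(l)}\mathbf{x}^{(l-1)}+v^{(l)})$ for $l=1,\dots,L$, where $W^{(1)}\in\mathbb{R}^{r\times p}$, $W^{(2)},\dots,W^{(L)}\in\mathbb{R}^{r\times r}$, $W^{(L+1)}\in\mathbb{R}^{1\times r}$, $v^{(1)},\dots,v^{(L)}\in\mathbb{R}^r$, $v^{(L+1)}\in\mathbb{R}$, all entries collected in $\theta\in\mathbb{R}^P$, $P=(p+1)r+(L-1)(r+1)r+r+1$. Clipped network $f_\theta=(-C)\vee(g_\theta\wedge C)$. $|\cdot|_1,|\cdot|_\infty$ are the $\ell^1$ and $\ell^\infty$ norms. *)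

theory Defs
  imports Complex_Main
begin

text \<open>Parameters theta of a ReLU network, stored layerwise:
  W l i j is entry (i,j) of the weight matrix W^(l), v l i is entry i of the bias v^(l),
  for layers l = 1..L+1. Only the entries with valid indices (see the index sets below)
  are coordinates of theta in R^P; other values are irrelevant.\<close>

type_synonym params = "(nat \<Rightarrow> nat \<Rightarrow> nat \<Rightarrow> real) \<times> (nat \<Rightarrow> nat \<Rightarrow> real)"

definition relu :: "real \<Rightarrow> real" where
  "relu t = max t 0"

definition in_dim :: "nat \<Rightarrow> nat \<Rightarrow> nat \<Rightarrow> nat" where
  "in_dim p r l = (if l = 1 then p else r)"

definition out_dim :: "nat \<Rightarrow> nat \<Rightarrow> nat \<Rightarrow> nat" where
  "out_dim L r l = (if l = L + 1 then 1 else r)"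

definition weight_idx :: "nat \<Rightarrow> nat \<Rightarrow> nat \<Rightarrow> (nat \<times> nat \<times> nat) set" where
  "weight_idx p L r = {(l, i, j). 1 \<le> l \<and> l \<le> L + 1 \<and> i < out_dim L r l \<and> j < in_dim p r l}"

definition bias_idx :: "nat \<Rightarrow> nat \<Rightarrow> (nat \<times> nat) set" where
  "bias_idx L r = {(l, i). 1 \<le> l \<and> l \<le> L + 1 \<and> i < out_dim L r l}"

definition param_box :: "nat \<Rightarrow> nat \<Rightarrow> nat \<Rightarrow> real \<Rightarrow> params \<Rightarrow> bool" where
  "param_box p L r B \<theta> \<longleftrightarrow>
     (\<forall>(l, i, j) \<in> weight_idx p L r. \<bar>fst \<theta> l i j\<bar> \<le> B) \<and>
     (\<forall>(l, i) \<in> bias_idx L r. \<bar>snd \<theta> l i\<bar> \<le> B)"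

definition param_dist_inf :: "nat \<Rightarrow> nat \<Rightarrow> nat \<Rightarrow> params \<Rightarrow> params \<Rightarrow> real" where
  "param_dist_inf p L r \<theta> \<theta>' =
     Max ((\<lambda>(l, i, j). \<bar>fst \<theta> l i j - fst \<theta>' l i j\<bar>) ` weight_idx p L r \<union>
          (\<lambda>(l, i). \<bar>snd \<theta> l i - snd \<theta>' l i\<bar>) ` bias_idx L r)"

text \<open>Hidden layers: hidden p r \<theta> x l = x^(l) (a vector indexed by nat, meaningful below r,
  resp. below p for l = 0).\<close>
fun hidden :: "nat \<Rightarrow> nat \<Rightarrow> params \<Rightarrow> (nat \<Rightarrow> real) \<Rightarrow> nat \<Rightarrow> (nat \<Rightarrow> real)" where
  "hidden p r \<theta> x 0 = x"
| "hidden p r \<theta> x (Suc l) =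
     (\<lambda>i. relu ((\<Sum>j < in_dim p r (Suc l). fst \<theta> (Suc l) i j * hidden p r \<theta> x l j)
                 + snd \<theta> (Suc l) i))"

definition net_g :: "nat \<Rightarrow> nat \<Rightarrow> nat \<Rightarrow> params \<Rightarrow> (nat \<Rightarrow> real) \<Rightarrow> real" where
  "net_g p L r \<theta> x =
     (\<Sum>j < r. fst \<theta> (L + 1) 0 j * hidden p r \<theta> x L j) + snd \<theta> (L + 1) 0"

definition net_f :: "nat \<Rightarrow> nat \<Rightarrow> nat \<Rightarrow> real \<Rightarrow> params \<Rightarrow> (nat \<Rightarrow> real) \<Rightarrow> real" where
  "net_f p L r C \<theta> x = max (- C) (min (net_g p L r \<theta> x) C)"

definition l1_norm :: "nat \<Rightarrow> (nat \<Rightarrow> real) \<Rightarrow> real" where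
  "l1_norm p x = (\<Sum>j < p. \<bar>x j\<bar>)"

end

theory Submission
  imports Defs
begin

text \<open>Track the \<open>\<ell>\<^sup>1\<close> norms of the hidden layers \<open>x\<^sub>l\<close> and of their differences.
  A layer with entries in \<open>[-B,B]\<close> and \<open>r\<close> rows maps \<open>|x|\<^sub>1\<close> to at most \<open>rB(|x|\<^sub>1 + 1)\<close>,
  and perturbing its parameters by at most \<open>D = |\<theta> - \<theta>'|\<^sub>\<infinity>\<close> adds at most
  \<open>rD(|x|\<^sub>1 + 1)\<close> to the propagated difference. With \<open>K = 2rB \<ge> 2\<close> and \<open>M = max |x|\<^sub>1 1\<close>,
  induction over the layers gives \<open>|x\<^sub>l|\<^sub>1 + 1 \<le> 2K\<^sup>lM\<close> and \<open>B|x\<^sub>l - x'\<^sub>l|\<^sub>1 \<le> 2K\<^sup>lMD\<close>.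
  The output layer contributes \<open>D(|x\<^sub>L|\<^sub>1 + 1) + B|x\<^sub>L - x'\<^sub>L|\<^sub>1 \<le> 4K\<^sup>LMD\<close>,
  and clipping is 1-Lipschitz.\<close>

lemma abs_relu_le: "\<bar>relu t\<bar> \<le> \<bar>t\<bar>"
  by (simp add: relu_def)

lemma abs_relu_diff_le: "\<bar>relu s - relu t\<bar> \<le> \<bar>s - t\<bar>"
  by (simp add: relu_def max_def)

lemma abs_clip_diff_le:
  fixes a b C :: real
  shows "\<bar>max (- C) (min a C) - max (- C) (min b C)\<bar> \<le> \<bar>a - b\<bar>"
  by (simp add: max_def min_def abs_if)

lemma l1_norm_nonneg: "0 \<le> l1_norm n u"
  by (simp add: l1_norm_def sum_nonneg)

lemma l1_norm_le_card_mult: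
  assumes "\<And>i. i < n \<Longrightarrow> \<bar>v i\<bar> \<le> c"
  shows "l1_norm n v \<le> real n * c"
  unfolding l1_norm_def using sum_bounded_above[of "{..<n}" "\<lambda>i. \<bar>v i\<bar>" c] assms by simp

lemma abs_sum_mult_le_l1_norm:
  assumes "\<And>j. j < n \<Longrightarrow> \<bar>w j\<bar> \<le> c"
  shows "\<bar>\<Sum>j<n. w j * u j\<bar> \<le> c * l1_norm n u"
proof -
  have "\<bar>\<Sum>j<n. w j * u j\<bar> \<le> (\<Sum>j<n. \<bar>w j\<bar> * \<bar>u j\<bar>)"
    by (rule order_trans[OF sum_abs]) (simp add: abs_mult)
  also have "\<dots> \<le> (\<Sum>j<n. c * \<bar>u j\<bar>)"
    by (intro sum_mono mult_right_mono) (simp_all add: assms)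
  finally show ?thesis
    by (simp add: l1_norm_def sum_distrib_left)
qed

lemma abs_affine_le:
  assumes "\<And>j. j < n \<Longrightarrow> \<bar>w j\<bar> \<le> B" and "\<bar>b\<bar> \<le> B"
  shows "\<bar>(\<Sum>j<n. w j * u j) + b\<bar> \<le> B * (l1_norm n u + 1)"
  using abs_sum_mult_le_l1_norm[of n w B u, OF assms(1)] assms(2)
  by (simp add: algebra_simps)

lemma abs_affine_diff_le:
  assumes "\<And>j. j < n \<Longrightarrow> \<bar>w' j\<bar> \<le> B"
    and "\<And>j. j < n \<Longrightarrow> \<bar>w j - w' j\<bar> \<le> D" and "\<bar>b - b'\<bar> \<le> D"
  shows "\<bar>((\<Sum>j<n. w j * u j) + b) - ((\<Sum>j<n. w' j * u' j) + b')\<bar>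
         \<le> D * (l1_norm n u + 1) + B * l1_norm n (\<lambda>j. u j - u' j)"
proof -
  have "((\<Sum>j<n. w j * u j) + b) - ((\<Sum>j<n. w' j * u' j) + b')
        = (\<Sum>j<n. (w j - w' j) * u j) + (\<Sum>j<n. w' j * (u j - u' j)) + (b - b')"
    by (simp add: sum_subtractf[symmetric] sum.distrib[symmetric] algebra_simps)
  moreover have "\<bar>\<Sum>j<n. (w j - w' j) * u j\<bar> \<le> D * l1_norm n u"
    by (rule abs_sum_mult_le_l1_norm) (rule assms(2))
  moreover have "\<bar>\<Sum>j<n. w' j * (u j - u' j)\<bar> \<le> B * l1_norm n (\<lambda>j. u j - u' j)"
    by (rule abs_sum_mult_le_l1_norm) (rule assms(1))
  ultimately show ?thesis
    using assms(3) by (simp add: algebra_simps)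
qed

lemma finite_weight_idx: "finite (weight_idx p L r)"
proof (rule finite_subset)
  show "weight_idx p L r \<subseteq> {..L+1} \<times> {..<max 1 r} \<times> {..<max p r}"
    by (auto simp: weight_idx_def in_dim_def out_dim_def split: if_splits)
qed auto

lemma finite_bias_idx: "finite (bias_idx L r)"
proof (rule finite_subset)
  show "bias_idx L r \<subseteq> {..L+1} \<times> {..<max 1 r}"
    by (auto simp: bias_idx_def out_dim_def split: if_splits)
qed auto

lemma weight_diff_le_param_dist_inf:
  assumes "(l, i, j) \<in> weight_idx p L r"
  shows "\<bar>fst \<theta> l i j - fst \<theta>' l i j\<bar> \<le> param_dist_inf p L r \<theta> \<theta>'"
  unfolding param_dist_inf_def
  by (rule Max_ge) (use assms finite_weight_idx finite_bias_idx in force)+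

lemma bias_diff_le_param_dist_inf:
  assumes "(l, i) \<in> bias_idx L r"
  shows "\<bar>snd \<theta> l i - snd \<theta>' l i\<bar> \<le> param_dist_inf p L r \<theta> \<theta>'"
  unfolding param_dist_inf_def
  by (rule Max_ge) (use assms finite_weight_idx finite_bias_idx in force)+

lemma param_dist_inf_nonneg: "0 \<le> param_dist_inf p L r \<theta> \<theta>'"
  using bias_diff_le_param_dist_inf[of "L + 1" 0 L r \<theta> \<theta>' p]
  by (simp add: bias_idx_def out_dim_def order_trans[OF abs_ge_zero])

lemma param_box_weight_le:
  "param_box p L r B \<theta> \<Longrightarrow> (l, i, j) \<in> weight_idx p L r \<Longrightarrow> \<bar>fst \<theta> l i j\<bar> \<le> B"
  unfolding param_box_def by fast

lemma param_box_bias_le: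
  "param_box p L r B \<theta> \<Longrightarrow> (l, i) \<in> bias_idx L r \<Longrightarrow> \<bar>snd \<theta> l i\<bar> \<le> B"
  unfolding param_box_def by fast

text \<open>The hidden vector \<open>x\<^sub>l\<close> has \<open>in_dim p r (l + 1)\<close> coordinates: \<open>p\<close> for \<open>l = 0\<close>, \<open>r\<close> otherwise.\<close>

definition layer_norm :: "nat \<Rightarrow> nat \<Rightarrow> params \<Rightarrow> (nat \<Rightarrow> real) \<Rightarrow> nat \<Rightarrow> real" where
  "layer_norm p r \<theta> x l = l1_norm (in_dim p r (Suc l)) (hidden p r \<theta> x l)"

definition layer_dist :: "nat \<Rightarrow> nat \<Rightarrow> params \<Rightarrow> params \<Rightarrow> (nat \<Rightarrow> real) \<Rightarrow> nat \<Rightarrow> real" where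
  "layer_dist p r \<theta> \<theta>' x l =
     l1_norm (in_dim p r (Suc l)) (\<lambda>j. hidden p r \<theta> x l j - hidden p r \<theta>' x l j)"

lemma hidden_layer_idx:
  assumes "Suc l \<le> L" and "i < r"
  shows "j < in_dim p r (Suc l) \<Longrightarrow> (Suc l, i, j) \<in> weight_idx p L r"
    and "(Suc l, i) \<in> bias_idx L r"
  using assms by (simp_all add: weight_idx_def bias_idx_def out_dim_def)

lemma output_layer_idx:
  shows "j < in_dim p r (Suc L) \<Longrightarrow> (Suc L, 0, j) \<in> weight_idx p L r"
    and "(Suc L, 0) \<in> bias_idx L r"
  by (simp_all add: weight_idx_def bias_idx_def out_dim_def)

lemma layer_norm_Suc_le:
  assumes "param_box p L r B \<theta>" and "Suc l \<le> L"
  shows "layer_norm p r \<theta> x (Suc l) \<le> real r * B * (layer_norm p r \<theta> x l + 1)"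
proof -
  have "\<bar>hidden p r \<theta> x (Suc l) i\<bar> \<le> B * (layer_norm p r \<theta> x l + 1)" if "i < r" for i
    unfolding hidden.simps layer_norm_def
    by (rule order_trans[OF abs_relu_le abs_affine_le])
      (use param_box_weight_le[OF assms(1) hidden_layer_idx(1)[OF assms(2) that]]
           param_box_bias_le[OF assms(1) hidden_layer_idx(2)[OF assms(2) that]] in auto)
  then show ?thesis
    using l1_norm_le_card_mult assms(2)
    by (simp add: layer_norm_def[of _ _ _ _ "Suc l"] in_dim_def mult.assoc)
qed

lemma layer_dist_Suc_le:
  assumes "param_box p L r B \<theta>'" and "Suc l \<le> L"
  shows "layer_dist p r \<theta> \<theta>' x (Suc l)
         \<le> real r * (param_dist_inf p L r \<theta> \<theta>' * (layer_norm p r \<theta> x l + 1)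
                     + B * layer_dist p r \<theta> \<theta>' x l)"
proof -
  have "\<bar>hidden p r \<theta> x (Suc l) i - hidden p r \<theta>' x (Suc l) i\<bar>
        \<le> param_dist_inf p L r \<theta> \<theta>' * (layer_norm p r \<theta> x l + 1) + B * layer_dist p r \<theta> \<theta>' x l"
    if "i < r" for i
    unfolding hidden.simps layer_norm_def layer_dist_def
    by (rule order_trans[OF abs_relu_diff_le abs_affine_diff_le])
      (use param_box_weight_le[OF assms(1) hidden_layer_idx(1)[OF assms(2) that]]
           weight_diff_le_param_dist_inf[OF hidden_layer_idx(1)[OF assms(2) that]]
           bias_diff_le_param_dist_inf[OF hidden_layer_idx(2)[OF assms(2) that]] in auto)
  then show ?thesis
    using l1_norm_le_card_mult assms(2)
    by (simp add: layer_dist_def[of _ _ _ _ _ "Suc l"] in_dim_def)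
qed

lemma net_g_diff_le:
  assumes "param_box p L r B \<theta>'" and "1 \<le> L"
  shows "\<bar>net_g p L r \<theta> x - net_g p L r \<theta>' x\<bar>
         \<le> param_dist_inf p L r \<theta> \<theta>' * (layer_norm p r \<theta> x L + 1) + B * layer_dist p r \<theta> \<theta>' x L"
proof -
  have width: "in_dim p r (Suc L) = r"
    using assms(2) by (simp add: in_dim_def)
  show ?thesis
    unfolding net_g_def layer_norm_def layer_dist_def width
    by (rule abs_affine_diff_le)
      (use param_box_weight_le[OF assms(1) output_layer_idx(1)]
           weight_diff_le_param_dist_inf[OF output_layer_idx(1)]
           bias_diff_le_param_dist_inf[OF output_layer_idx(2)] width in auto)
qed

lemma layer_norm_le:
  assumes "param_box p L r B \<theta>" and "1 \<le> real r * B" and "l \<le> L"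
  shows "layer_norm p r \<theta> x l + 1 \<le> 2 * (2 * real r * B) ^ l * max (l1_norm p x) 1"
  using assms(3)
proof (induction l)
  case 0
  then show ?case
    by (simp add: layer_norm_def in_dim_def)
next
  case (Suc l)
  define K where "K = 2 * real r * B"
  have "1 * 1 \<le> real r * B * (layer_norm p r \<theta> x l + 1)"
    by (rule mult_mono) (use assms(2) l1_norm_nonneg in \<open>auto simp: layer_norm_def\<close>)
  then have "layer_norm p r \<theta> x (Suc l) + 1 \<le> K * (layer_norm p r \<theta> x l + 1)"
    using layer_norm_Suc_le[OF assms(1) Suc.prems, of x] unfolding K_def by linarith
  also have "\<dots> \<le> K * (2 * K ^ l * max (l1_norm p x) 1)"
  proof (rule mult_left_mono)
    show "layer_norm p r \<theta> x l + 1 \<le> 2 * K ^ l * max (l1_norm p x) 1"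
      unfolding K_def by (rule Suc.IH) (use Suc.prems in simp)
  qed (use assms(2) in \<open>simp add: K_def mult.commute\<close>)
  finally show ?case
    by (simp add: K_def ac_simps)
qed

lemma layer_dist_le:
  assumes "param_box p L r B \<theta>" and "param_box p L r B \<theta>'"
    and "1 \<le> real r * B" and "l \<le> L"
  shows "B * layer_dist p r \<theta> \<theta>' x l
         \<le> 2 * (2 * real r * B) ^ l * max (l1_norm p x) 1 * param_dist_inf p L r \<theta> \<theta>'"
  using assms(4)
proof (induction l)
  case 0
  then show ?case
    using param_dist_inf_nonneg by (simp add: layer_dist_def l1_norm_def)
next
  case (Suc l)
  define D where "D = param_dist_inf p L r \<theta> \<theta>'"
  define Q where "Q = 2 * (2 * real r * B) ^ l * max (l1_norm p x) 1"
  have B: "0 \<le> B"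
    using assms(3) by (smt (verit) mult_nonneg_nonpos of_nat_0_le_iff)
  have D: "0 \<le> D"
    using param_dist_inf_nonneg by (simp add: D_def)
  have norm: "layer_norm p r \<theta> x l + 1 \<le> Q"
    unfolding Q_def by (rule layer_norm_le[OF assms(1,3)]) (use Suc.prems in simp)
  have dist: "B * layer_dist p r \<theta> \<theta>' x l \<le> Q * D"
    unfolding Q_def D_def by (rule Suc.IH) (use Suc.prems in simp)
  have "B * layer_dist p r \<theta> \<theta>' x (Suc l)
        \<le> real r * B * (D * (layer_norm p r \<theta> x l + 1))
           + real r * B * (B * layer_dist p r \<theta> \<theta>' x l)"
    using mult_left_mono[OF layer_dist_Suc_le[OF assms(2) Suc.prems] B]
    by (simp add: D_def algebra_simps)
  also have "\<dots> \<le> real r * B * (D * Q) + real r * B * (Q * D)"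
    by (intro add_mono mult_left_mono) (use norm dist B D in auto)
  finally show ?case
    by (simp add: Q_def D_def algebra_simps)
qed

theorem lemma4p4:
  fixes p L r :: nat and B C :: real and \<theta> \<theta>' :: params and x :: "nat \<Rightarrow> real"
  assumes "p \<ge> 1" and "L \<ge> 1" and "r \<ge> 1"
    and "B \<ge> 1" and "C \<ge> 1"
    and "param_box p L r B \<theta>" and "param_box p L r B \<theta>'"
  shows "\<bar>net_f p L r C \<theta> x - net_f p L r C \<theta>' x\<bar>
         \<le> 4 * (2 * real r * B) ^ L * max (l1_norm p x) 1 * param_dist_inf p L r \<theta> \<theta>'"
proof -
  let ?D = "param_dist_inf p L r \<theta> \<theta>'"
  let ?Q = "2 * (2 * real r * B) ^ L * max (l1_norm p x) 1"
  have K: "1 \<le> real r * B"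
    using mult_mono[of 1 "real r" 1 B] assms(3,4) by simp
  have "\<bar>net_f p L r C \<theta> x - net_f p L r C \<theta>' x\<bar> \<le> \<bar>net_g p L r \<theta> x - net_g p L r \<theta>' x\<bar>"
    unfolding net_f_def by (rule abs_clip_diff_le)
  also have "\<dots> \<le> ?D * (layer_norm p r \<theta> x L + 1) + B * layer_dist p r \<theta> \<theta>' x L"
    using net_g_diff_le[OF assms(7,2)] .
  also have "\<dots> \<le> ?D * ?Q + ?Q * ?D"
    using layer_norm_le[OF assms(6) K order_refl] layer_dist_le[OF assms(6,7) K order_refl]
    by (intro add_mono mult_left_mono) (simp_all add: param_dist_inf_nonneg)
  finally show ?thesis
    by (simp add: algebra_simps)
qed

end
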